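(* Let $f:[0,\infty)\to\mathbb{R}$ be differentiable, let $0<a<b<\infty$, and suppose $f'$ is Lebesgue integrable on $[a,b]$. Let $m\in(0,1]$ and $q>1$, and suppose $|f'|^q$ is $(1,m)$-GA-convex on $[0,\max\{a^{1/m},b\}]$. Then \[ \biggl|\frac{b^2f(b)-a^2f(a)}{2}-\int_a^b xf(x)\,dx\biggr|\le\frac{\ln b-\ln a}{2^{1+1/q}}\bigl[L\bigl(a^{3q/(q-1)},b^{3q/(q-1)}\bigr)\bigr]^{1-1/q}\Bigl[|f'(b)|^q+m\bigl|f'(a^{1/m})\bigr|^q\Bigr]^{1/q}. \]
   Context: For $c>0$, $h:[0,c]\to\mathbb{R}$ and $(\alpha,m)\in(0,1]^2$, $h$ is called $(\alpha,m)$-GA-convex on $[0,c]$ if $h\bigl(x^\lambda y^{m(1-\lambda)}\bigr)\le\lambda^\alpha h(x)+m(1-\lambda^\alpha)h(y)$ for all $x,y\in[0,c]$ and all $\lambda\in[0,1]$ (with the convention $0^0=1$). For $x,y>0$, $x\neq y$, the logarithmic mean is $L(x,y)=\frac{y-x}{\ln y-\ln x}$. *)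

theory Defs
  imports "HOL-Analysis.Analysis"
begin

text \<open>Real power with the convention 0^0 = 1 (Isabelle's powr has 0 powr 0 = 0).\<close>
definition gpow :: "real \<Rightarrow> real \<Rightarrow> real" where
  "gpow x e = (if e = 0 then 1 else x powr e)"

definition GA_convex :: "real \<Rightarrow> real \<Rightarrow> real \<Rightarrow> (real \<Rightarrow> real) \<Rightarrow> bool" where
  "GA_convex \<alpha> m c h \<longleftrightarrow>
     (\<forall>x\<in>{0..c}. \<forall>y\<in>{0..c}. \<forall>t\<in>{0..1}.
        h (gpow x t * gpow y (m * (1 - t)))
          \<le> gpow t \<alpha> * h x + m * (1 - gpow t \<alpha>) * h y)"

definition logmean :: "real \<Rightarrow> real \<Rightarrow> real" where
  "logmean x y = (y - x) / (ln y - ln x)"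

end

theory Submission
  imports Defs
begin

text \<open>With t = (ln x - ln a)/(ln b - ln a), every x in [a,b] is the geometric combination
  b^t (a^(1/m))^(m(1-t)), so GA-convexity bounds |f'(x)|^q by t |f'(b)|^q + m(1-t) |f'(a^(1/m))|^q;
  after division by x the substitution t = t(x) makes this bound integrable in closed form.
  Integrating x^2 f'(x) by parts and splitting x^2 = x^(3-1/p) x^(-1/q) for Holder's inequality
  with 1/p + 1/q = 1 gives the estimate, the first factor producing the logarithmic mean.\<close>

lemma GA_convex_log_interpolation:
  assumes conv: "GA_convex \<alpha> m c h" and m: "m \<noteq> 0"
    and ab: "0 < a" "a < b" and x: "x \<in> {a..b}"
    and c: "b \<le> c" "a powr (1/m) \<le> c"
  defines "t \<equiv> (ln x - ln a) / (ln b - ln a)"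
  shows "h x \<le> gpow t \<alpha> * h b + m * (1 - gpow t \<alpha>) * h (a powr (1/m))"
proof -
  have D: "ln a < ln b" using ab by simp
  have t01: "t \<in> {0..1}"
    using x ab D by (auto simp: t_def field_simps)
  have "t * (ln b - ln a) = ln x - ln a"
    using D by (simp add: t_def)
  then have "t * ln b + (1 - t) * ln a = ln x"
    by (simp add: algebra_simps)
  then have "b powr t * a powr (1 - t) = x"
    using ab x by (simp add: powr_def exp_add[symmetric])
  moreover have "gpow b t = b powr t" "gpow (a powr (1/m)) (m * (1 - t)) = a powr (1 - t)"
    using ab m by (simp_all add: gpow_def powr_powr)
  moreover have "h (gpow b t * gpow (a powr (1/m)) (m * (1 - t)))
      \<le> gpow t \<alpha> * h b + m * (1 - gpow t \<alpha>) * h (a powr (1/m))"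
    using conv t01 ab c unfolding GA_convex_def by simp
  ultimately show ?thesis by simp
qed

lemma has_integral_powr_interval:
  fixes a b r :: real
  assumes "0 < a" "a \<le> b" "r \<noteq> 0"
  shows "((\<lambda>x. x powr (r - 1)) has_integral (b powr r - a powr r) / r) {a..b}"
proof -
  have "((\<lambda>x. x powr r / r) has_vector_derivative x powr (r - 1)) (at x within {a..b})"
    if "x \<in> {a..b}" for x
    using that assms unfolding has_real_derivative_iff_has_vector_derivative[symmetric]
    by (auto intro!: derivative_eq_intros)
  from fundamental_theorem_of_calculus[OF assms(2) this] show ?thesis
    by (simp add: diff_divide_distrib)
qed

lemma has_integral_log_interpolation:
  fixes a b P Q m :: real
  assumes ab: "0 < a" "a < b"
  defines "t \<equiv> \<lambda>x. (ln x - ln a) / (ln b - ln a)"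
  shows "((\<lambda>x. (t x * P + m * (1 - t x) * Q) / x) has_integral (ln b - ln a) * (P + m * Q) / 2) {a..b}"
proof -
  define D where "D = ln b - ln a"
  have D: "D > 0" using ab by (simp add: D_def)
  define F where "F = (\<lambda>x. D * (P * t x ^ 2 / 2 + m * Q * (t x - t x ^ 2 / 2)))"
  have "(F has_vector_derivative (t x * P + m * (1 - t x) * Q) / x) (at x within {a..b})"
    if "x \<in> {a..b}" for x
    using that ab D unfolding has_real_derivative_iff_has_vector_derivative[symmetric]
    by (auto intro!: derivative_eq_intros simp: F_def t_def D_def[symmetric] field_simps power2_eq_square)
  from fundamental_theorem_of_calculus[OF _ this] ab
  have "((\<lambda>x. (t x * P + m * (1 - t x) * Q) / x) has_integral F b - F a) {a..b}" by simp
  moreover have "F b - F a = D * (P + m * Q) / 2"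
  proof -
    have "t b = 1" "t a = 0"
      using D by (simp_all add: t_def D_def[symmetric])
    then show ?thesis by (simp add: F_def algebra_simps)
  qed
  ultimately show ?thesis unfolding D_def by (simp only:)
qed

lemma has_integral_sq_times_deriv:
  fixes f f' :: "real \<Rightarrow> real"
  assumes "a \<le> b" "\<And>x. x \<in> {a..b} \<Longrightarrow> (f has_real_derivative f' x) (at x within {a..b})"
  shows "((\<lambda>x. x\<^sup>2 * f' x) has_integral b\<^sup>2 * f b - a\<^sup>2 * f a - 2 * integral {a..b} (\<lambda>x. x * f x)) {a..b}"
proof -
  have "continuous_on {a..b} f"
    using assms(2) by (meson DERIV_continuous continuous_on_eq_continuous_within)
  then have "(\<lambda>x. 2 * (x * f x)) integrable_on {a..b}"
    by (intro integrable_continuous_real continuous_intros)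
  moreover have "((\<lambda>x. x\<^sup>2 * f x) has_vector_derivative 2 * (x * f x) + x\<^sup>2 * f' x) (at x within {a..b})"
    if "x \<in> {a..b}" for x
    unfolding has_real_derivative_iff_has_vector_derivative[symmetric]
    by (auto intro!: derivative_eq_intros assms(2) that)
  from fundamental_theorem_of_calculus[OF assms(1) this]
  have "((\<lambda>x. 2 * (x * f x) + x\<^sup>2 * f' x) has_integral b\<^sup>2 * f b - a\<^sup>2 * f a) {a..b}"
    by simp
  ultimately have "((\<lambda>x. 2 * (x * f x) + x\<^sup>2 * f' x - 2 * (x * f x)) has_integral
      b\<^sup>2 * f b - a\<^sup>2 * f a - integral {a..b} (\<lambda>x. 2 * (x * f x))) {a..b}"
    by (intro has_integral_diff integrable_integral)
  then show ?thesis by simp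
qed

lemma abs_integral_le_Holder:
  fixes \<phi> u w :: "real \<Rightarrow> real"
  assumes pq: "p > 1" "q > 1" "1/p + 1/q = 1"
    and u: "(u has_integral A) S" "A > 0" "\<And>x. x \<in> S \<Longrightarrow> 0 \<le> u x"
    and w: "(w has_integral B) S" "B > 0" "\<And>x. x \<in> S \<Longrightarrow> 0 \<le> w x"
    and \<phi>: "\<phi> integrable_on S" "\<And>x. x \<in> S \<Longrightarrow> \<bar>\<phi> x\<bar> \<le> u x powr (1/p) * w x powr (1/q)"
  shows "\<bar>integral S \<phi>\<bar> \<le> A powr (1/p) * B powr (1/q)"
proof -
  define C where "C = A powr (1/p) * B powr (1/q)"
  have C: "C > 0" using u w by (simp add: C_def)
  have pointwise: "\<bar>\<phi> x\<bar> \<le> C * (u x / (p * A) + w x / (q * B))" if x: "x \<in> S" for x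
  proof -
    have "\<bar>\<phi> x\<bar> \<le> C * ((u x / A) powr (1/p) * (w x / B) powr (1/q))"
      using \<phi>(2)[OF x] u w x by (simp add: C_def powr_divide field_simps)
    also have "(u x / A) powr (1/p) * (w x / B) powr (1/q)
        \<le> ((u x / A) powr (1/p)) powr p / p + ((w x / B) powr (1/q)) powr q / q"
      using pq u w x by (intro Youngs_inequality) auto
    also have "\<dots> = u x / (p * A) + w x / (q * B)"
      using pq u w x by (simp add: powr_powr mult.commute)
    finally show ?thesis using C by simp
  qed
  have "((\<lambda>x. C * (u x / (p * A) + w x / (q * B))) has_integral C * (A / (p * A) + B / (q * B))) S"
    by (intro has_integral_mult_right has_integral_add has_integral_divide u w)
  moreover have "C * (A / (p * A) + B / (q * B)) = C"
    using pq u w by simp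
  ultimately have K: "((\<lambda>x. C * (u x / (p * A) + w x / (q * B))) has_integral C) S"
    by metis
  then have "norm (integral S \<phi>) \<le> integral S (\<lambda>x. C * (u x / (p * A) + w x / (q * B)))"
    using pointwise by (intro integral_norm_bound_integral \<phi>(1)) (auto dest: has_integral_integrable)
  then have "\<bar>integral S \<phi>\<bar> \<le> C"
    using integral_unique[OF K] by (metis real_norm_def)
  then show ?thesis by (simp add: C_def)
qed

lemma abs_sq_mult_le_Holder_split:
  fixes x y p q T :: real
  assumes x: "x > 0" and q: "q > 1" and pq: "1/p + 1/q = 1" and y: "\<bar>y\<bar> powr q \<le> T"
  shows "\<bar>x\<^sup>2 * y\<bar> \<le> (x powr (3*p - 1)) powr (1/p) * (T / x) powr (1/q)"
proof -
  have T: "T \<ge> 0" using y by (smt (verit) powr_ge_zero)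
  have "\<bar>y\<bar> = (\<bar>y\<bar> powr q) powr (1/q)"
    using q by (simp add: powr_powr)
  also have "\<dots> \<le> T powr (1/q)"
    using y q by (intro powr_mono2) auto
  finally have "\<bar>x\<^sup>2 * y\<bar> \<le> x\<^sup>2 * T powr (1/q)"
    by (simp add: abs_mult mult_left_mono)
  also have "x\<^sup>2 * T powr (1/q) = (x powr (3*p - 1)) powr (1/p) * (T / x) powr (1/q)"
  proof -
    have "p \<noteq> 0" using pq q by auto
    then have "(3*p - 1) * (1/p) = 2 + 1/q"
      using pq by (simp add: field_simps)
    then have "(x powr (3*p - 1)) powr (1/p) = x powr 2 * x powr (1/q)"
      by (simp add: powr_powr powr_add)
    then show ?thesis
      using x T by (simp add: powr_divide powr_realpow)
  qed
  finally show ?thesis .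
qed

lemma abs_integral_sq_mult_le_logmean:
  fixes g :: "real \<Rightarrow> real" and a b q m P Q :: real
  defines "t \<equiv> \<lambda>x. (ln x - ln a) / (ln b - ln a)"
  assumes ab: "0 < a" "a < b" and q: "q > 1" and nonneg: "0 \<le> m" "0 \<le> P" "0 \<le> Q"
    and int: "(\<lambda>x. x\<^sup>2 * g x) integrable_on {a..b}"
    and bound: "\<And>x. x \<in> {a..b} \<Longrightarrow> \<bar>g x\<bar> powr q \<le> t x * P + m * (1 - t x) * Q"
  shows "\<bar>integral {a..b} (\<lambda>x. x\<^sup>2 * g x)\<bar>
    \<le> (ln b - ln a) / 2 powr (1/q) * logmean (a powr (3*q/(q-1))) (b powr (3*q/(q-1))) powr (1 - 1/q)
       * (P + m * Q) powr (1/q)"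
proof -
  define p where "p = q / (q - 1)"
  have p: "p > 1" "1/p + 1/q = 1" "1/p = 1 - 1/q" using q by (auto simp: p_def field_simps)
  define D where "D = ln b - ln a"
  have D: "D > 0" using ab by (simp add: D_def)
  define L where "L = logmean (a powr (3*p)) (b powr (3*p))"
  define A where "A = (b powr (3*p) - a powr (3*p)) / (3*p)"
  have "a powr (3*p) < b powr (3*p)" using ab p by (intro powr_less_mono2) auto
  then have A: "A > 0" "A = D * L"
    using ab p by (simp_all add: A_def L_def logmean_def D_def ln_powr field_simps)
  define T where "T = (\<lambda>x. t x * P + m * (1 - t x) * Q)"
  have T: "T x \<ge> 0" if "x \<in> {a..b}" for x
    using bound[OF that] T_def by (smt (verit) powr_ge_zero)
  have RHS: "A powr (1/p) * (D * (P + m * Q) / 2) powr (1/q)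
      = D / 2 powr (1/q) * L powr (1 - 1/q) * (P + m * Q) powr (1/q)"
  proof -
    have "A powr (1/p) * (D * (P + m * Q) / 2) powr (1/q)
        = (D powr (1 - 1/q) * D powr (1/q)) * L powr (1 - 1/q) * (P + m * Q) powr (1/q) / 2 powr (1/q)"
      using A D nonneg by (simp add: p(3) powr_mult powr_divide zero_le_mult_iff)
    also have "D powr (1 - 1/q) * D powr (1/q) = D"
      using D by (simp add: powr_add[symmetric])
    finally show ?thesis by simp
  qed
  show ?thesis
  proof (cases "P + m * Q = 0")
    case True
    then have "T x = 0" for x using nonneg by (auto simp: T_def add_nonneg_eq_0_iff)
    then have "g x = 0" if "x \<in> {a..b}" for x
      using bound[OF that] T_def by simp
    then have "integral {a..b} (\<lambda>x. x\<^sup>2 * g x) = integral {a..b} (\<lambda>x. 0)"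
      by (intro integral_cong) simp
    then show ?thesis
      using D unfolding D_def[symmetric] by simp
  next
    case False
    have "\<bar>integral {a..b} (\<lambda>x. x\<^sup>2 * g x)\<bar> \<le> A powr (1/p) * (D * (P + m * Q) / 2) powr (1/q)"
    proof (rule abs_integral_le_Holder[OF p(1) q p(2) _ A(1) _ _ _ _ int])
      show "((\<lambda>x. x powr (3*p - 1)) has_integral A) {a..b}"
        using has_integral_powr_interval[of a b "3*p"] ab p by (simp add: A_def)
      show "((\<lambda>x. T x / x) has_integral D * (P + m * Q) / 2) {a..b}"
        using has_integral_log_interpolation[OF ab] by (simp add: T_def t_def D_def)
      show "D * (P + m * Q) / 2 > 0"
        using D False nonneg by (simp add: order_less_le)
      fix x assume x: "x \<in> {a..b}"
      then have "x > 0" using ab by simp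
      then show "0 \<le> x powr (3*p - 1)" "0 \<le> T x / x" using T[OF x] by simp_all
      show "\<bar>x\<^sup>2 * g x\<bar> \<le> (x powr (3*p - 1)) powr (1/p) * (T x / x) powr (1/q)"
        using abs_sq_mult_le_Holder_split[OF \<open>x > 0\<close> q p(2)] bound[OF x] by (simp add: T_def)
    qed
    also note RHS
    finally show ?thesis
      by (simp only: L_def D_def p_def times_divide_eq_right)
  qed
qed

theorem corollary3p4:
  fixes f f' :: "real \<Rightarrow> real" and a b m q :: real
  assumes deriv: "\<And>x. x \<ge> 0 \<Longrightarrow> (f has_real_derivative f' x) (at x within {0..})"
    and ab: "0 < a" "a < b"
    and int: "set_integrable lborel {a..b} f'"
    and m: "0 < m" "m \<le> 1"
    and q: "q > 1"
    and conv: "GA_convex 1 m (max (a powr (1/m)) b) (\<lambda>x. \<bar>f' x\<bar> powr q)"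
  shows "\<bar>(b\<^sup>2 * f b - a\<^sup>2 * f a) / 2 - integral {a..b} (\<lambda>x. x * f x)\<bar>
    \<le> (ln b - ln a) / 2 powr (1 + 1/q)
       * (logmean (a powr (3*q/(q-1))) (b powr (3*q/(q-1)))) powr (1 - 1/q)
       * (\<bar>f' b\<bar> powr q + m * \<bar>f' (a powr (1/m))\<bar> powr q) powr (1/q)"
proof -
  have "(f has_real_derivative f' x) (at x within {a..b})" if "x \<in> {a..b}" for x
    using deriv[of x] that ab by (auto intro: has_field_derivative_subset)
  then have parts: "((\<lambda>x. x\<^sup>2 * f' x) has_integral
      b\<^sup>2 * f b - a\<^sup>2 * f a - 2 * integral {a..b} (\<lambda>x. x * f x)) {a..b}"
    using ab by (intro has_integral_sq_times_deriv) auto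
  have "\<bar>f' x\<bar> powr q \<le> (ln x - ln a) / (ln b - ln a) * \<bar>f' b\<bar> powr q
      + m * (1 - (ln x - ln a) / (ln b - ln a)) * \<bar>f' (a powr (1/m))\<bar> powr q"
    if "x \<in> {a..b}" for x
    using GA_convex_log_interpolation[OF conv _ ab that] that ab m by (simp add: gpow_def)
  from abs_integral_sq_mult_le_logmean[OF ab q _ _ _ has_integral_integrable[OF parts] this] m
  have bound: "\<bar>integral {a..b} (\<lambda>x. x\<^sup>2 * f' x)\<bar> \<le> (ln b - ln a) / 2 powr (1/q)
      * logmean (a powr (3*q/(q-1))) (b powr (3*q/(q-1))) powr (1 - 1/q)
      * (\<bar>f' b\<bar> powr q + m * \<bar>f' (a powr (1/m))\<bar> powr q) powr (1/q)"
    (is "_ \<le> ?D / _ * ?L * ?S")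
    by simp
  have "(b\<^sup>2 * f b - a\<^sup>2 * f a) / 2 - integral {a..b} (\<lambda>x. x * f x)
      = integral {a..b} (\<lambda>x. x\<^sup>2 * f' x) / 2"
    using integral_unique[OF parts] by simp
  then have "\<bar>(b\<^sup>2 * f b - a\<^sup>2 * f a) / 2 - integral {a..b} (\<lambda>x. x * f x)\<bar>
      = \<bar>integral {a..b} (\<lambda>x. x\<^sup>2 * f' x)\<bar> / 2"
    by (simp only: abs_divide abs_numeral)
  also have "\<dots> \<le> ?D / 2 powr (1/q) * ?L * ?S / 2"
    using bound by (rule divide_right_mono) simp
  also have "\<dots> = ?D / 2 powr (1 + 1/q) * ?L * ?S"
    by (simp add: powr_add)
  finally show ?thesis .
qed

end
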